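(* Let $\langle\cdot,\cdot\rangle$ be an inner product on $\mathrm{span}(\mathcal{H})$ and let $d(A,B)=\langle h_A-h_B,h_A-h_B\rangle^{1/2}$ for $A,B\in\mathcal{K}_n$. Let $A_1,\dots,A_N\in\mathcal{K}_n$ with $N\geq 1$. Then the convex body $X\in\mathcal{K}_n$ minimizing $\sum_{i=1}^N d(A_i,X)^2$ is $X=\frac{1}{N}\sum_{i=1}^N A_i$ (Minkowski sum).
   Context: A convex body is a closed, bounded, non-empty convex subset of $\mathbb{R}^n$; $\mathcal{K}_n$ is the set of convex bodies in $\mathbb{R}^n$ with Minkowski addition and nonnegative scaling. The support function of $A$ is $h_A(x)=\sup\{a\cdot x: a\in A\}$; $\mathcal{H}=\{h_A : A\in\mathcal{K}_n\}$ and $\mathrm{span}(\mathcal{H})$ is its linear span among real functions on $\mathbb{R}^n$. *)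

theory Defs
  imports "HOL-Analysis.Analysis" "HOL-Library.Set_Algebras"
begin

definition convex_bodies :: "'a::euclidean_space set set" where
  "convex_bodies = {A. closed A \<and> bounded A \<and> A \<noteq> {} \<and> convex A}"

definition support_fun :: "'a::euclidean_space set \<Rightarrow> 'a \<Rightarrow> real" where
  "support_fun A x = (SUP a\<in>A. a \<bullet> x)"

definition span_H :: "('a::euclidean_space \<Rightarrow> real) set" where
  "span_H = {f. \<exists>(k::nat) (c::nat \<Rightarrow> real) (B::nat \<Rightarrow> 'a set).
                 (\<forall>i<k. B i \<in> convex_bodies) \<and>
                 f = (\<lambda>x. \<Sum>i<k. c i * support_fun (B i) x)}"

definition inner_product_on_span_H ::
    "(('a::euclidean_space \<Rightarrow> real) \<Rightarrow> ('a \<Rightarrow> real) \<Rightarrow> real) \<Rightarrow> bool" where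
  "inner_product_on_span_H ip \<longleftrightarrow>
     (\<forall>f\<in>span_H. \<forall>g\<in>span_H. ip f g = ip g f) \<and>
     (\<forall>f\<in>span_H. \<forall>g\<in>span_H. \<forall>k\<in>span_H. ip (\<lambda>x. f x + g x) k = ip f k + ip g k) \<and>
     (\<forall>f\<in>span_H. \<forall>g\<in>span_H. \<forall>c::real. ip (\<lambda>x. c * f x) g = c * ip f g) \<and>
     (\<forall>f\<in>span_H. ip f f \<ge> 0) \<and>
     (\<forall>f\<in>span_H. ip f f = 0 \<longrightarrow> f = (\<lambda>x. 0))"

definition body_dist ::
    "(('a::euclidean_space \<Rightarrow> real) \<Rightarrow> ('a \<Rightarrow> real) \<Rightarrow> real) \<Rightarrow> 'a set \<Rightarrow> 'a set \<Rightarrow> real" where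
  "body_dist ip A B =
     sqrt (ip (\<lambda>x. support_fun A x - support_fun B x) (\<lambda>x. support_fun A x - support_fun B x))"

text \<open>Minkowski average (1/N)(A_0 + ... + A_{N-1}); the sum is the Minkowski sum
  from Set_Algebras.\<close>
definition minkowski_average :: "nat \<Rightarrow> (nat \<Rightarrow> 'a::euclidean_space set) \<Rightarrow> 'a set" where
  "minkowski_average N A = (\<lambda>v. (1 / real N) *\<^sub>R v) ` (\<Sum>i<N. A i)"

end

theory Submission
  imports Defs
begin

text \<open>Support functions turn Minkowski addition and nonnegative scaling into pointwise
  addition and scaling, so the support function h_M of the Minkowski average M of the A_i is
  the mean of the h_A_i. Writing h_A_i - h_Y = (h_A_i - h_M) + (h_M - h_Y), where the first
  summands add up to zero, the cross terms cancel and
  \<Sum>_i d(A_i, Y)^2 = \<Sum>_i d(A_i, M)^2 + N d(M, Y)^2.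
  Hence Y is a minimiser iff d(M, Y) = 0, i.e. h_Y = h_M, and a convex body is determined by
  its support function, being the intersection of its supporting half-spaces.\<close>

lemma convex_bodies_iff: "A \<in> convex_bodies \<longleftrightarrow> compact A \<and> convex A \<and> A \<noteq> {}"
  unfolding convex_bodies_def using compact_eq_bounded_closed by blast

lemma support_fun_eqI:
  assumes "a \<in> A" "\<And>b. b \<in> A \<Longrightarrow> b \<bullet> x \<le> a \<bullet> x"
  shows "support_fun A x = a \<bullet> x"
  unfolding support_fun_def by (rule cSup_eq_maximum) (use assms in auto)

lemma support_fun_attained:
  fixes A :: "'a::euclidean_space set"
  assumes "compact A" "A \<noteq> {}"
  obtains a where "a \<in> A" "\<And>b. b \<in> A \<Longrightarrow> b \<bullet> x \<le> a \<bullet> x" "support_fun A x = a \<bullet> x"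
proof -
  have "continuous_on A (\<lambda>a. a \<bullet> x)"
    by (intro continuous_intros)
  then obtain a where "a \<in> A" "\<forall>b\<in>A. b \<bullet> x \<le> a \<bullet> x"
    using continuous_attains_sup[OF assms] by blast
  with support_fun_eqI[of a A x] show thesis by (auto intro: that)
qed

lemma inner_le_support_fun:
  assumes "bounded A" "a \<in> A"
  shows "a \<bullet> x \<le> support_fun A x"
proof -
  have "bounded ((\<lambda>a. a \<bullet> x) ` A)"
    using assms(1) by (rule bounded_linear_image) (rule bounded_linear_inner_left)
  then show ?thesis
    unfolding support_fun_def using assms(2) by (intro cSUP_upper bounded_imp_bdd_above)
qed

lemma support_fun_set_plus:
  fixes A B :: "'a::euclidean_space set"
  assumes "compact A" "A \<noteq> {}" "compact B" "B \<noteq> {}"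
  shows "support_fun (A + B) x = support_fun A x + support_fun B x"
proof -
  obtain a where a: "a \<in> A" "\<And>a'. a' \<in> A \<Longrightarrow> a' \<bullet> x \<le> a \<bullet> x" "support_fun A x = a \<bullet> x"
    using support_fun_attained[OF assms(1,2)] by blast
  obtain b where b: "b \<in> B" "\<And>b'. b' \<in> B \<Longrightarrow> b' \<bullet> x \<le> b \<bullet> x" "support_fun B x = b \<bullet> x"
    using support_fun_attained[OF assms(3,4)] by blast
  have "support_fun (A + B) x = (a + b) \<bullet> x"
    using a b by (intro support_fun_eqI) (auto simp: set_plus_def inner_add_left intro!: add_mono)
  with a b show ?thesis by (simp add: inner_add_left)
qed

lemma support_fun_scaleR:
  fixes A :: "'a::euclidean_space set"
  assumes "compact A" "A \<noteq> {}" "c \<ge> 0"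
  shows "support_fun ((\<lambda>v. c *\<^sub>R v) ` A) x = c * support_fun A x"
proof -
  obtain a where a: "a \<in> A" "\<And>a'. a' \<in> A \<Longrightarrow> a' \<bullet> x \<le> a \<bullet> x" "support_fun A x = a \<bullet> x"
    using support_fun_attained[OF assms(1,2)] by blast
  have "support_fun ((\<lambda>v. c *\<^sub>R v) ` A) x = (c *\<^sub>R a) \<bullet> x"
    using a assms(3) by (intro support_fun_eqI) (auto intro!: mult_left_mono)
  with a show ?thesis by simp
qed

lemma set_plus_in_convex_bodies:
  assumes "A \<in> convex_bodies" "B \<in> convex_bodies"
  shows "A + B \<in> convex_bodies"
proof -
  have "A + B = {a + b |a b. a \<in> A \<and> b \<in> B}"
    by (auto simp: set_plus_def)
  with assms compact_sums[of A B] have "compact (A + B)"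
    by (simp add: convex_bodies_iff)
  moreover have "A + B \<noteq> {}"
    using assms by (auto simp: convex_bodies_iff set_plus_def)
  ultimately show ?thesis
    using assms by (simp add: convex_bodies_iff convex_set_plus)
qed

lemma scaleR_image_in_convex_bodies:
  "A \<in> convex_bodies \<Longrightarrow> (\<lambda>v. c *\<^sub>R v) ` A \<in> convex_bodies"
  unfolding convex_bodies_iff by (auto intro: convex_scaling compact_scaling)

lemma sum_in_convex_bodies:
  fixes A :: "nat \<Rightarrow> 'a::euclidean_space set"
  shows "\<forall>i<n. A i \<in> convex_bodies \<Longrightarrow> (\<Sum>i<n. A i) \<in> convex_bodies"
  by (induction n) (simp_all add: convex_bodies_iff[of "{0}"] set_plus_in_convex_bodies)

lemma support_fun_sum:
  fixes A :: "nat \<Rightarrow> 'a::euclidean_space set"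
  assumes "\<forall>i<n. A i \<in> convex_bodies"
  shows "support_fun (\<Sum>i<n. A i) x = (\<Sum>i<n. support_fun (A i) x)"
  using assms
proof (induction n)
  case 0
  show ?case by (simp add: support_fun_eqI[of 0 "{0}" x, simplified])
next
  case (Suc n)
  then have "(\<Sum>i<n. A i) \<in> convex_bodies" "A n \<in> convex_bodies"
    by (auto intro: sum_in_convex_bodies)
  with Suc show ?case by (simp add: support_fun_set_plus convex_bodies_iff)
qed

lemma minkowski_average_in_convex_bodies:
  "\<forall>i<N. A i \<in> convex_bodies \<Longrightarrow> minkowski_average N A \<in> convex_bodies"
  unfolding minkowski_average_def
  by (intro scaleR_image_in_convex_bodies sum_in_convex_bodies)

lemma support_fun_minkowski_average:
  assumes "\<forall>i<N. A i \<in> convex_bodies"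
  shows "support_fun (minkowski_average N A) x = (\<Sum>i<N. support_fun (A i) x) / real N"
  using sum_in_convex_bodies[OF assms]
  by (simp add: minkowski_average_def support_fun_scaleR convex_bodies_iff support_fun_sum[OF assms])

lemma mem_convex_body_iff:
  assumes "B \<in> convex_bodies"
  shows "z \<in> B \<longleftrightarrow> (\<forall>x. z \<bullet> x \<le> support_fun B x)"
proof
  assume "z \<in> B"
  with assms show "\<forall>x. z \<bullet> x \<le> support_fun B x"
    by (auto simp: convex_bodies_def intro: inner_le_support_fun)
next
  assume le: "\<forall>x. z \<bullet> x \<le> support_fun B x"
  show "z \<in> B"
  proof (rule ccontr)
    assume "z \<notin> B"
    then obtain a b where "a \<bullet> z < b" and sep: "\<forall>y\<in>B. b < a \<bullet> y"
      using separating_hyperplane_closed_point[of B z] assms by (auto simp: convex_bodies_def)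
    have "support_fun B (- a) \<le> - b"
      unfolding support_fun_def using assms sep
      by (intro cSUP_least) (auto simp: convex_bodies_def inner_commute less_imp_le)
    with le \<open>a \<bullet> z < b\<close> show False
      by (metis inner_commute inner_minus_right neg_le_iff_le not_le order.trans)
  qed
qed

lemma support_fun_inject:
  assumes "A \<in> convex_bodies" "B \<in> convex_bodies" "support_fun A = support_fun B"
  shows "A = B"
  using assms by (simp add: set_eq_iff mem_convex_body_iff)

lemma support_fun_in_span_H: "B \<in> convex_bodies \<Longrightarrow> support_fun B \<in> span_H"
  unfolding span_H_def
  by (intro CollectI exI[of _ 1] exI[of _ "\<lambda>_. 1"] exI[of _ "\<lambda>_. B"]) auto

lemma zero_in_span_H: "(\<lambda>x. 0) \<in> span_H"
  unfolding span_H_def by (intro CollectI exI[of _ 0]) simp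

lemma scale_in_span_H:
  assumes "f \<in> span_H"
  shows "(\<lambda>x. c * f x) \<in> span_H"
proof -
  obtain k :: nat and d B where "\<forall>i<k. B i \<in> convex_bodies" "f = (\<lambda>x. \<Sum>i<k. d i * support_fun (B i) x)"
    using assms unfolding span_H_def by blast
  then show ?thesis
    unfolding span_H_def
    by (intro CollectI exI[of _ k] exI[of _ "\<lambda>i. c * d i"] exI[of _ B])
       (simp add: sum_distrib_left mult.assoc)
qed

lemma add_support_fun_in_span_H:
  assumes "f \<in> span_H" "B \<in> convex_bodies"
  shows "(\<lambda>x. f x + c * support_fun B x) \<in> span_H"
proof -
  obtain k :: nat and d C where C: "\<forall>i<k. C i \<in> convex_bodies"
    and f: "f = (\<lambda>x. \<Sum>i<k. d i * support_fun (C i) x)"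
    using assms(1) unfolding span_H_def by blast
  have "(\<Sum>i<k. (d(k := c)) i * support_fun ((C(k := B)) i) x) = f x" for x
    unfolding f by (intro sum.cong) auto
  then have "(\<lambda>x. f x + c * support_fun B x) =
      (\<lambda>x. \<Sum>i<Suc k. (d(k := c)) i * support_fun ((C(k := B)) i) x)"
    by simp
  moreover have "\<forall>i<Suc k. (C(k := B)) i \<in> convex_bodies"
    using C assms(2) by (simp add: less_Suc_eq)
  ultimately show ?thesis
    unfolding span_H_def by (intro CollectI exI conjI)
qed

lemma add_in_span_H:
  assumes "f \<in> span_H" "g \<in> span_H"
  shows "(\<lambda>x. f x + g x) \<in> span_H"
proof -
  obtain k :: nat and d C where C: "\<forall>i<k. C i \<in> convex_bodies"
    and g: "g = (\<lambda>x. \<Sum>i<k. d i * support_fun (C i) x)"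
    using assms(2) unfolding span_H_def by blast
  have "(\<lambda>x. f x + (\<Sum>i<n. d i * support_fun (C i) x)) \<in> span_H" if "n \<le> k" for n
    using that
  proof (induction n)
    case 0
    then show ?case using assms(1) by simp
  next
    case (Suc n)
    then have "(\<lambda>x. f x + (\<Sum>i<n. d i * support_fun (C i) x) + d n * support_fun (C n) x) \<in> span_H"
      using C by (intro add_support_fun_in_span_H) auto
    then show ?case by (simp add: add.assoc)
  qed
  then show ?thesis by (simp add: g)
qed

lemma diff_in_span_H: "f \<in> span_H \<Longrightarrow> g \<in> span_H \<Longrightarrow> (\<lambda>x. f x - g x) \<in> span_H"
  using add_in_span_H[of f "\<lambda>x. - 1 * g x"] scale_in_span_H[of g "- 1"] by simp

lemma sum_in_span_H:
  fixes n :: nat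
  shows "\<forall>i<n. u i \<in> span_H \<Longrightarrow> (\<lambda>x. \<Sum>i<n. u i x) \<in> span_H"
  by (induction n) (simp_all add: zero_in_span_H add_in_span_H)

context
  fixes ip :: "('a::euclidean_space \<Rightarrow> real) \<Rightarrow> ('a \<Rightarrow> real) \<Rightarrow> real"
  assumes ip: "inner_product_on_span_H ip"
begin

lemma ip_commute: "f \<in> span_H \<Longrightarrow> g \<in> span_H \<Longrightarrow> ip f g = ip g f"
  using ip unfolding inner_product_on_span_H_def by blast

lemma ip_add_left:
  "f \<in> span_H \<Longrightarrow> g \<in> span_H \<Longrightarrow> k \<in> span_H \<Longrightarrow> ip (\<lambda>x. f x + g x) k = ip f k + ip g k"
  using ip unfolding inner_product_on_span_H_def by blast

lemma ip_scale_left: "f \<in> span_H \<Longrightarrow> g \<in> span_H \<Longrightarrow> ip (\<lambda>x. c * f x) g = c * ip f g"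
  using ip unfolding inner_product_on_span_H_def by blast

lemma ip_self_nonneg: "f \<in> span_H \<Longrightarrow> ip f f \<ge> 0"
  using ip unfolding inner_product_on_span_H_def by blast

lemma ip_zero_left: "g \<in> span_H \<Longrightarrow> ip (\<lambda>x. 0) g = 0"
  using ip_scale_left[of "\<lambda>x. 0" g 0] zero_in_span_H by simp

lemma ip_self_eq_0_imp: "f \<in> span_H \<Longrightarrow> ip f f = 0 \<Longrightarrow> f = (\<lambda>x. 0)"
  using ip unfolding inner_product_on_span_H_def by blast

lemma ip_self_eq_0_iff: "f \<in> span_H \<Longrightarrow> ip f f = 0 \<longleftrightarrow> f = (\<lambda>x. 0)"
  using ip_self_eq_0_imp ip_zero_left[OF zero_in_span_H] by auto

lemma ip_sum_left:
  fixes n :: nat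
  assumes "\<forall>i<n. u i \<in> span_H" "v \<in> span_H"
  shows "ip (\<lambda>x. \<Sum>i<n. u i x) v = (\<Sum>i<n. ip (u i) v)"
  using assms(1)
proof (induction n)
  case 0
  then show ?case using ip_zero_left[OF assms(2)] by simp
next
  case (Suc n)
  then have "(\<lambda>x. \<Sum>i<n. u i x) \<in> span_H" "u n \<in> span_H"
    by (auto intro: sum_in_span_H)
  then have "ip (\<lambda>x. (\<Sum>i<n. u i x) + u n x) v = ip (\<lambda>x. \<Sum>i<n. u i x) v + ip (u n) v"
    using assms(2) by (rule ip_add_left)
  with Suc show ?case by simp
qed

lemma ip_self_add:
  assumes "f \<in> span_H" "g \<in> span_H"
  shows "ip (\<lambda>x. f x + g x) (\<lambda>x. f x + g x) = ip f f + 2 * ip f g + ip g g"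
proof -
  have fg: "(\<lambda>x. f x + g x) \<in> span_H"
    using assms by (rule add_in_span_H)
  have "ip (\<lambda>x. f x + g x) (\<lambda>x. f x + g x) = ip f (\<lambda>x. f x + g x) + ip g (\<lambda>x. f x + g x)"
    using assms fg by (rule ip_add_left)
  also have "\<dots> = (ip f f + ip g f) + (ip f g + ip g g)"
    using assms fg by (simp add: ip_commute[of _ "\<lambda>x. f x + g x"] ip_add_left)
  finally show ?thesis
    using ip_commute[OF assms] by simp
qed

lemma sum_ip_self_add_centered:
  assumes u: "\<forall>i<n. u i \<in> span_H" and v: "v \<in> span_H"
    and centered: "(\<lambda>x. \<Sum>i<n. u i x) = (\<lambda>x. 0)"
  shows "(\<Sum>i<n. ip (\<lambda>x. u i x + v x) (\<lambda>x. u i x + v x)) = (\<Sum>i<n. ip (u i) (u i)) + real n * ip v v"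
proof -
  have "(\<Sum>i<n. ip (\<lambda>x. u i x + v x) (\<lambda>x. u i x + v x)) = (\<Sum>i<n. ip (u i) (u i) + 2 * ip (u i) v + ip v v)"
    using u v by (intro sum.cong) (simp_all add: ip_self_add)
  also have "\<dots> = (\<Sum>i<n. ip (u i) (u i)) + 2 * ip (\<lambda>x. \<Sum>i<n. u i x) v + real n * ip v v"
    using u v by (simp add: ip_sum_left sum.distrib sum_distrib_left)
  finally show ?thesis
    using centered ip_zero_left[OF v] by simp
qed

lemma power2_body_dist:
  assumes "A \<in> convex_bodies" "B \<in> convex_bodies"
  shows "(body_dist ip A B)\<^sup>2 = ip (\<lambda>x. support_fun A x - support_fun B x) (\<lambda>x. support_fun A x - support_fun B x)"
  using assms unfolding body_dist_def
  by (simp add: ip_self_nonneg diff_in_span_H support_fun_in_span_H)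

lemma body_dist_eq_0_iff:
  assumes "A \<in> convex_bodies" "B \<in> convex_bodies"
  shows "body_dist ip A B = 0 \<longleftrightarrow> A = B"
proof -
  have "body_dist ip A B = 0 \<longleftrightarrow> (\<lambda>x. support_fun A x - support_fun B x) = (\<lambda>x. 0)"
    using assms unfolding body_dist_def
    by (simp add: ip_self_eq_0_iff diff_in_span_H support_fun_in_span_H)
  also have "\<dots> \<longleftrightarrow> A = B"
    using support_fun_inject[OF assms] by (auto simp: fun_eq_iff)
  finally show ?thesis .
qed

lemma sum_power2_body_dist_minkowski_average:
  assumes A: "\<forall>i<N. A i \<in> convex_bodies" and Y: "Y \<in> convex_bodies"
  defines "M \<equiv> minkowski_average N A"
  shows "(\<Sum>i<N. (body_dist ip (A i) Y)\<^sup>2) =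
    (\<Sum>i<N. (body_dist ip (A i) M)\<^sup>2) + real N * (body_dist ip M Y)\<^sup>2"
proof -
  have M: "M \<in> convex_bodies"
    unfolding M_def using A by (rule minkowski_average_in_convex_bodies)
  define u where "u = (\<lambda>i x. support_fun (A i) x - support_fun M x)"
  define v where "v = (\<lambda>x. support_fun M x - support_fun Y x)"
  have u_span: "\<forall>i<N. u i \<in> span_H" and v_span: "v \<in> span_H"
    using A M Y by (auto simp: u_def v_def diff_in_span_H support_fun_in_span_H)
  have "(\<lambda>x. \<Sum>i<N. u i x) = (\<lambda>x. 0)"
    using A by (auto simp: fun_eq_iff u_def sum_subtractf M_def support_fun_minkowski_average)
  then have "(\<Sum>i<N. ip (\<lambda>x. u i x + v x) (\<lambda>x. u i x + v x)) = (\<Sum>i<N. ip (u i) (u i)) + real N * ip v v"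
    by (rule sum_ip_self_add_centered[OF u_span v_span])
  then show ?thesis
    using A M Y by (simp add: power2_body_dist u_def v_def)
qed

end

theorem proposition8:
  fixes ip :: "('a::euclidean_space \<Rightarrow> real) \<Rightarrow> ('a \<Rightarrow> real) \<Rightarrow> real"
    and A :: "nat \<Rightarrow> 'a set"
    and N :: nat
  assumes "inner_product_on_span_H ip"
    and "N \<ge> 1"
    and "\<forall>i<N. A i \<in> convex_bodies"
  shows "minkowski_average N A \<in> convex_bodies \<and>
         (\<forall>X\<in>convex_bodies.
            (\<forall>Y\<in>convex_bodies. (\<Sum>i<N. (body_dist ip (A i) X)\<^sup>2) \<le> (\<Sum>i<N. (body_dist ip (A i) Y)\<^sup>2))
            \<longleftrightarrow> X = minkowski_average N A)"
proof -
  define M where "M = minkowski_average N A"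
  define S where "S Y = (\<Sum>i<N. (body_dist ip (A i) Y)\<^sup>2)" for Y
  have M: "M \<in> convex_bodies"
    unfolding M_def using assms(3) by (rule minkowski_average_in_convex_bodies)
  have S_eq: "S Y = S M + real N * (body_dist ip M Y)\<^sup>2" if "Y \<in> convex_bodies" for Y
    unfolding S_def M_def by (rule sum_power2_body_dist_minkowski_average[OF assms(1,3) that])
  have "(\<forall>Y\<in>convex_bodies. S X \<le> S Y) \<longleftrightarrow> X = M" if X: "X \<in> convex_bodies" for X
  proof
    assume "\<forall>Y\<in>convex_bodies. S X \<le> S Y"
    with M have "real N * (body_dist ip M X)\<^sup>2 \<le> 0"
      using S_eq[OF X] by fastforce
    with assms(2) have "body_dist ip M X = 0"
      by (simp add: mult_le_0_iff)
    then show "X = M"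
      using body_dist_eq_0_iff[OF assms(1) M X] by simp
  next
    assume "X = M"
    then show "\<forall>Y\<in>convex_bodies. S X \<le> S Y"
      using S_eq by simp
  qed
  with M show ?thesis
    unfolding S_def M_def by simp
qed

end
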